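(* Let $n$ be a positive integer, and let $a\in\mathcal{T}_n$ with $\operatorname{rank}(a)=r$. Then (i) $a\mathcal{T}_na\cong\mathcal{T}_r^c$ for some $c\in\mathcal{T}_r$ with $\operatorname{rank}(c)=\operatorname{rank}(a^2)$; (ii) $\mathcal{T}_n^a\cong b\mathcal{T}_{2n-r}b$ for some $b\in\mathcal{T}_{2n-r}$ with $\operatorname{rank}(b)=n$.
   Context: For a positive integer $m$, $\mathcal{T}_m$ denotes the full transformation semigroup on $\{1,\ldots,m\}$: the set of all functions $\{1,\ldots,m\}\to\{1,\ldots,m\}$ under composition (functions are written to the right of their arguments and composed left-to-right). The rank of $f\in\mathcal{T}_m$ is $\operatorname{rank}(f)=|\operatorname{im}(f)|$. For a semigroup $S$ and $a\in S$, the local subsemigroup $aSa=\{axa: x\in S\}$ is a subsemigroup of $S$ (with the operation of $S$), and the variant $S^a$ is the semigroup with underlying set $S$ and operation $x\star_a y=xay$. Isomorphism $\cong$ means semigroup isomorphism. *)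

theory Defs
  imports Main
begin

text \<open>Transformations of the m-element set, represented as the set {0..<m}
  (a relabelling of {1..m}). To make the representation canonical, a transformation
  is a function on nat that maps {0..<m} into itself and fixes every point >= m.\<close>

definition FullT :: "nat \<Rightarrow> (nat \<Rightarrow> nat) set" where
  "FullT m = {f. (\<forall>x<m. f x < m) \<and> (\<forall>x\<ge>m. f x = x)}"

text \<open>Product in T_m: functions are written to the right of their arguments and composed
  left to right, so x(fg) = (xf)g, i.e. tmul f g = g o f.\<close>

definition tmul :: "(nat \<Rightarrow> nat) \<Rightarrow> (nat \<Rightarrow> nat) \<Rightarrow> (nat \<Rightarrow> nat)" where
  "tmul f g = g \<circ> f"

definition trank :: "nat \<Rightarrow> (nat \<Rightarrow> nat) \<Rightarrow> nat" where
  "trank m f = card (f ` {0..<m})"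

definition local_sub :: "nat \<Rightarrow> (nat \<Rightarrow> nat) \<Rightarrow> (nat \<Rightarrow> nat) set" where
  "local_sub m a = {tmul (tmul a x) a | x. x \<in> FullT m}"

definition variant_mul :: "(nat \<Rightarrow> nat) \<Rightarrow> (nat \<Rightarrow> nat) \<Rightarrow> (nat \<Rightarrow> nat) \<Rightarrow> (nat \<Rightarrow> nat)" where
  "variant_mul a x y = tmul (tmul x a) y"

definition sg_iso :: "'a set \<Rightarrow> ('a \<Rightarrow> 'a \<Rightarrow> 'a) \<Rightarrow> 'b set \<Rightarrow> ('b \<Rightarrow> 'b \<Rightarrow> 'b) \<Rightarrow> bool" where
  "sg_iso A opA B opB \<longleftrightarrow>
     (\<exists>\<phi>. bij_betw \<phi> A B \<and> (\<forall>x\<in>A. \<forall>y\<in>A. \<phi> (opA x y) = opB (\<phi> x) (\<phi> y)))"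

end

theory Submission
  imports Defs
begin

text \<open>Write \<open>A\<close> for the image of \<open>a\<close> in \<open>T\<^sub>m\<close>. The elements of \<open>a T\<^sub>m a\<close> are exactly
  the maps \<open>i \<mapsto> g (a i)\<close> with \<open>g\<close> a self-map of \<open>A\<close>, and the product of two such maps
  composes their \<open>g\<close>-parts with \<open>a\<close> inserted in between. Transporting \<open>A\<close> to \<open>{0..<k}\<close>
  along a bijection \<open>e\<close> therefore identifies \<open>a T\<^sub>m a\<close> with the variant of \<open>T\<^sub>k\<close> at
  \<open>c = e\<inverse> \<circ> a \<circ> e\<close>, whose rank is \<open>|a A| = rank(a\<^sup>2)\<close>; this is (i). For (ii), extend \<open>a\<close>
  to \<open>b \<in> T\<^sub>2\<^sub>n\<^sub>-\<^sub>r\<close> mapping the \<open>n - r\<close> new points onto the complement of \<open>A\<close> in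
  \<open>{0..<n}\<close>: then \<open>b\<close> has image \<open>{0..<n}\<close> and restricts to \<open>a\<close> there, so the same
  identification with \<open>e = id\<close> gives \<open>T\<^sub>n\<^sup>a \<cong> b T\<^sub>2\<^sub>n\<^sub>-\<^sub>r b\<close>.\<close>

definition tcanon :: "nat \<Rightarrow> (nat \<Rightarrow> nat) \<Rightarrow> nat \<Rightarrow> nat" where
  "tcanon m f i = (if i < m then f i else i)"

lemma tcanon_in_FullT: "(\<And>i. i < m \<Longrightarrow> f i < m) \<Longrightarrow> tcanon m f \<in> FullT m"
  by (simp add: FullT_def tcanon_def)

lemma FullT_tmul: "f \<in> FullT m \<Longrightarrow> g \<in> FullT m \<Longrightarrow> tmul f g \<in> FullT m"
  by (auto simp: FullT_def tmul_def)

lemma FullT_variant_mul: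
  "c \<in> FullT m \<Longrightarrow> f \<in> FullT m \<Longrightarrow> g \<in> FullT m \<Longrightarrow> variant_mul c f g \<in> FullT m"
  by (simp add: variant_mul_def FullT_tmul)

lemma image_FullT_subset: "a \<in> FullT m \<Longrightarrow> a ` {0..<m} \<subseteq> {0..<m}"
  by (auto simp: FullT_def)

lemma sg_iso_sym:
  assumes "sg_iso A opA B opB" and closed: "\<And>x y. x \<in> A \<Longrightarrow> y \<in> A \<Longrightarrow> opA x y \<in> A"
  shows "sg_iso B opB A opA"
proof -
  obtain \<phi> where bij: "bij_betw \<phi> A B" and hom: "\<forall>x\<in>A. \<forall>y\<in>A. \<phi> (opA x y) = opB (\<phi> x) (\<phi> y)"
    using assms(1) by (auto simp: sg_iso_def)
  let ?\<psi> = "inv_into A \<phi>"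
  have "?\<psi> (opB x y) = opA (?\<psi> x) (?\<psi> y)" if "x \<in> B" "y \<in> B" for x y
  proof -
    have in_A: "?\<psi> x \<in> A" "?\<psi> y \<in> A"
      using that bij by (auto simp: bij_betw_def inv_into_into)
    have "opB x y = \<phi> (opA (?\<psi> x) (?\<psi> y))"
      using hom in_A that bij by (simp add: bij_betw_def f_inv_into_f)
    then show ?thesis
      using closed[OF in_A] bij by (simp add: bij_betw_def inv_into_f_f)
  qed
  then show ?thesis
    using bij_betw_inv_into[OF bij] by (auto simp: sg_iso_def)
qed

lemma local_sub_eq:
  assumes "a \<in> FullT m"
  shows "local_sub m a = {tcanon m (g \<circ> a) | g. g ` a ` {0..<m} \<subseteq> a ` {0..<m}}"
proof (intro set_eqI iffI)
  fix s assume "s \<in> local_sub m a"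
  then obtain x where x: "x \<in> FullT m" and s: "s = tmul (tmul a x) a"
    by (auto simp: local_sub_def)
  have "s = tcanon m ((a \<circ> x) \<circ> a)"
    using assms x by (auto simp: s tcanon_def tmul_def FullT_def)
  moreover have "(a \<circ> x) ` a ` {0..<m} \<subseteq> a ` {0..<m}"
    using assms x by (auto simp: FullT_def)
  ultimately show "s \<in> {tcanon m (g \<circ> a) | g. g ` a ` {0..<m} \<subseteq> a ` {0..<m}}"
    by blast
next
  fix s assume "s \<in> {tcanon m (g \<circ> a) | g. g ` a ` {0..<m} \<subseteq> a ` {0..<m}}"
  then obtain g where g: "g ` a ` {0..<m} \<subseteq> a ` {0..<m}" and s: "s = tcanon m (g \<circ> a)"
    by blast
  define x where "x = tcanon m (\<lambda>y. if y \<in> a ` {0..<m} then inv_into {0..<m} a (g y) else y)"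
  have preimage: "inv_into {0..<m} a (g y) < m" "a (inv_into {0..<m} a (g y)) = g y"
    if "y \<in> a ` {0..<m}" for y
  proof -
    have gy: "g y \<in> a ` {0..<m}"
      using g that by blast
    show "inv_into {0..<m} a (g y) < m" "a (inv_into {0..<m} a (g y)) = g y"
      using inv_into_into[OF gy] f_inv_into_f[OF gy] by auto
  qed
  have "x \<in> FullT m"
    unfolding x_def by (rule tcanon_in_FullT) (auto simp: preimage)
  moreover have "s = tmul (tmul a x) a"
    using assms by (auto simp: s x_def tcanon_def tmul_def preimage FullT_def)
  ultimately show "s \<in> local_sub m a"
    by (auto simp: local_sub_def)
qed

lemma sg_iso_variant_local_sub:
  assumes aF: "a \<in> FullT m" and e: "bij_betw e {0..<k} (a ` {0..<m})"
  defines "e' \<equiv> inv_into {0..<k} e"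
  shows "sg_iso (FullT k) (variant_mul (tcanon k (e' \<circ> a \<circ> e))) (local_sub m a) tmul"
proof -
  let ?A = "a ` {0..<m}"
  define c where "c = tcanon k (e' \<circ> a \<circ> e)"
  define \<psi> where "\<psi> t = tcanon m (e \<circ> t \<circ> e' \<circ> a)" for t
  have eA: "j < k \<Longrightarrow> e j \<in> ?A" for j
    using e by (auto simp: bij_betw_def)
  have e'A: "y \<in> ?A \<Longrightarrow> e' y < k" for y
    using e inv_into_into[of y e "{0..<k}"] by (simp add: e'_def bij_betw_def)
  have e'e: "j < k \<Longrightarrow> e' (e j) = j" for j
    using e by (simp add: e'_def bij_betw_def inv_into_f_f)
  have ee': "y \<in> ?A \<Longrightarrow> e (e' y) = y" for y
    using e by (simp add: e'_def bij_betw_def f_inv_into_f)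
  have em: "j < k \<Longrightarrow> e j < m" for j
    using eA image_FullT_subset[OF aF] by fastforce
  have t_lt: "t \<in> FullT k \<Longrightarrow> j < k \<Longrightarrow> t j < k" for t j
    by (simp add: FullT_def)
  have inj: "inj_on \<psi> (FullT k)"
  proof (rule inj_onI)
    fix t t' assume t: "t \<in> FullT k" and t': "t' \<in> FullT k" and eq: "\<psi> t = \<psi> t'"
    have agree: "t j = t' j" if j: "j < k" for j
    proof -
      obtain i where i: "i < m" "a i = e j"
        using eA[OF j] by auto
      have "e (t j) = e (t' j)"
        using fun_cong[OF eq, of i] i j by (simp add: \<psi>_def tcanon_def e'e)
      then show ?thesis
        using e t_lt[OF t j] t_lt[OF t' j] by (auto simp: bij_betw_def dest: inj_onD)
    qed
    show "t = t'"
    proof (rule ext)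
      fix j show "t j = t' j"
        using agree t t' by (cases "j < k") (auto simp: FullT_def)
    qed
  qed
  have "\<psi> ` FullT k = local_sub m a"
  proof (unfold local_sub_eq[OF aF], intro set_eqI iffI)
    fix s assume "s \<in> \<psi> ` FullT k"
    then obtain t where "t \<in> FullT k" "s = \<psi> t" by blast
    moreover have "(e \<circ> t \<circ> e') ` ?A \<subseteq> ?A"
      using \<open>t \<in> FullT k\<close> by (intro image_subsetI) (simp add: eA t_lt e'A)
    ultimately show "s \<in> {tcanon m (g \<circ> a) | g. g ` ?A \<subseteq> ?A}"
      unfolding \<psi>_def by blast
  next
    fix s assume "s \<in> {tcanon m (g \<circ> a) | g. g ` ?A \<subseteq> ?A}"
    then obtain g where g: "g ` ?A \<subseteq> ?A" and s: "s = tcanon m (g \<circ> a)" by blast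
    define t where "t = tcanon k (e' \<circ> g \<circ> e)"
    have g_e: "g (e j) \<in> ?A" if "j < k" for j
      by (rule subsetD[OF g imageI[OF eA[OF that]]])
    have "t \<in> FullT k"
      unfolding t_def by (intro tcanon_in_FullT) (simp add: e'A g_e)
    moreover have "s = \<psi> t"
    proof (rule ext)
      fix i show "s i = \<psi> t i"
      proof (cases "i < m")
        case True
        then have "a i \<in> ?A" "g (a i) \<in> ?A"
          using g by auto
        then show ?thesis
          using True by (simp add: s \<psi>_def t_def tcanon_def e'A ee')
      qed (simp add: s \<psi>_def tcanon_def)
    qed
    ultimately show "s \<in> \<psi> ` FullT k" by blast
  qed
  moreover have "\<psi> (variant_mul c t1 t2) = tmul (\<psi> t1) (\<psi> t2)"
    if "t1 \<in> FullT k" "t2 \<in> FullT k" for t1 t2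
    using that by (auto simp: \<psi>_def c_def tcanon_def variant_mul_def tmul_def em e'A t_lt)
  ultimately show ?thesis
    using inj unfolding sg_iso_def c_def bij_betw_def by blast
qed

lemma FullT_tcanon_conj:
  assumes aF: "a \<in> FullT m" and e: "bij_betw e {0..<k} (a ` {0..<m})"
  shows "tcanon k (inv_into {0..<k} e \<circ> a \<circ> e) \<in> FullT k"
proof (rule tcanon_in_FullT)
  fix j assume "j < k"
  then have "e j \<in> a ` {0..<m}"
    using e by (auto simp: bij_betw_def)
  then have "a (e j) \<in> e ` {0..<k}"
    using e image_FullT_subset[OF aF] by (auto simp: bij_betw_def)
  from inv_into_into[OF this] show "(inv_into {0..<k} e \<circ> a \<circ> e) j < k"
    by simp
qed

lemma trank_tcanon_conj:
  assumes aF: "a \<in> FullT m" and e: "bij_betw e {0..<k} (a ` {0..<m})"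
  shows "trank k (tcanon k (inv_into {0..<k} e \<circ> a \<circ> e)) = trank m (tmul a a)"
proof -
  let ?A = "a ` {0..<m}" and ?e' = "inv_into {0..<k} e"
  have "tcanon k (?e' \<circ> a \<circ> e) ` {0..<k} = (?e' \<circ> a \<circ> e) ` {0..<k}"
    by (rule image_cong) (simp_all add: tcanon_def)
  also have "\<dots> = ?e' ` a ` ?A"
    using e unfolding bij_betw_def image_comp[symmetric] by argo
  finally have image_eq: "tcanon k (?e' \<circ> a \<circ> e) ` {0..<k} = ?e' ` a ` ?A" .
  have "inj_on ?e' (a ` ?A)"
    using e image_FullT_subset[OF aF] inj_on_inv_into[of ?A e "{0..<k}"]
    by (auto simp: bij_betw_def intro: inj_on_subset)
  then have "trank k (tcanon k (?e' \<circ> a \<circ> e)) = card (a ` ?A)"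
    unfolding trank_def image_eq by (rule card_image)
  also have "\<dots> = trank m (tmul a a)"
    by (simp add: trank_def tmul_def image_comp)
  finally show ?thesis .
qed

lemma sg_iso_variant_local_sub_onto:
  assumes bF: "b \<in> FullT m" and onto: "b ` {0..<m} = {0..<n}"
    and aF: "a \<in> FullT n" and ba: "\<And>i. i < n \<Longrightarrow> b i = a i"
  shows "sg_iso (FullT n) (variant_mul a) (local_sub m b) tmul"
proof -
  have "tcanon n (inv_into {0..<n} id \<circ> b \<circ> id) = a"
  proof (rule ext)
    fix i
    have "i < n \<Longrightarrow> inv_into {0..<n} id (a i) = a i"
      using aF by (intro inv_into_f_eq) (auto simp: FullT_def)
    then show "tcanon n (inv_into {0..<n} id \<circ> b \<circ> id) i = a i"
      using aF by (simp add: tcanon_def ba FullT_def)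
  qed
  moreover have "bij_betw id {0..<n} (b ` {0..<m})"
    by (simp add: onto)
  ultimately show ?thesis
    using sg_iso_variant_local_sub[OF bF] by metis
qed

lemma FullT_extension_onto:
  assumes aF: "a \<in> FullT n" and rk: "trank n a = r"
  obtains b where "b \<in> FullT (2 * n - r)" "b ` {0..<2 * n - r} = {0..<n}" "\<And>i. i < n \<Longrightarrow> b i = a i"
proof -
  let ?m = "2 * n - r" and ?A = "a ` {0..<n}"
  have "r \<le> n"
    using rk card_mono[OF _ image_FullT_subset[OF aF]] by (simp add: trank_def)
  then have "card {n..<?m} = card ({0..<n} - ?A)"
    using rk image_FullT_subset[OF aF] by (simp add: trank_def card_Diff_subset finite_subset)
  then obtain h where h: "bij_betw h {n..<?m} ({0..<n} - ?A)"
    using finite_same_card_bij by blast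
  define b where "b i = (if i < n then a i else if i < ?m then h i else i)" for i
  have "n \<le> ?m"
    using \<open>r \<le> n\<close> by simp
  then have "b ` {0..<?m} = b ` {0..<n} \<union> b ` {n..<?m}"
    by (metis image_Un ivl_disj_un_two(3) zero_le)
  also have "\<dots> = ?A \<union> h ` {n..<?m}"
    by (simp add: b_def)
  also have "\<dots> = {0..<n}"
    using h image_FullT_subset[OF aF] by (auto simp: bij_betw_def)
  finally have onto: "b ` {0..<?m} = {0..<n}" .
  have "b \<in> FullT ?m"
    unfolding FullT_def
  proof (intro CollectI conjI allI impI)
    fix i assume "i < ?m"
    then have "b i \<in> b ` {0..<?m}"
      by simp
    then have "b i \<in> {0..<n}"
      by (simp only: onto)
    then show "b i < ?m"
      using \<open>n \<le> ?m\<close> by simp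
  next
    fix i assume "?m \<le> i"
    then show "b i = i"
      using \<open>n \<le> ?m\<close> by (simp add: b_def)
  qed
  with onto show ?thesis
    using that by (simp add: b_def)
qed

theorem theorem1p4:
  fixes n r :: nat and a :: "nat \<Rightarrow> nat"
  assumes "0 < n" and "a \<in> FullT n" and "trank n a = r"
  shows "(\<exists>c\<in>FullT r. trank r c = trank n (tmul a a) \<and>
            sg_iso (local_sub n a) tmul (FullT r) (variant_mul c))
       \<and> (\<exists>b\<in>FullT (2 * n - r). trank (2 * n - r) b = n \<and>
            sg_iso (FullT n) (variant_mul a) (local_sub (2 * n - r) b) tmul)"
proof
  obtain e where e: "bij_betw e {0..<r} (a ` {0..<n})"
    using ex_bij_betw_nat_finite[of "a ` {0..<n}"] assms(3) by (auto simp: trank_def)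
  let ?c = "tcanon r (inv_into {0..<r} e \<circ> a \<circ> e)"
  have cF: "?c \<in> FullT r"
    using assms(2) e by (rule FullT_tcanon_conj)
  show "\<exists>c\<in>FullT r. trank r c = trank n (tmul a a) \<and>
          sg_iso (local_sub n a) tmul (FullT r) (variant_mul c)"
    using cF trank_tcanon_conj[OF assms(2) e]
      sg_iso_sym[OF sg_iso_variant_local_sub[OF assms(2) e] FullT_variant_mul[OF cF]] by blast
next
  obtain b where bF: "b \<in> FullT (2 * n - r)" and onto: "b ` {0..<2 * n - r} = {0..<n}"
    and ba: "\<And>i. i < n \<Longrightarrow> b i = a i"
    using FullT_extension_onto[OF assms(2,3)] by metis
  show "\<exists>b\<in>FullT (2 * n - r). trank (2 * n - r) b = n \<and>
          sg_iso (FullT n) (variant_mul a) (local_sub (2 * n - r) b) tmul"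
  proof (intro bexI conjI)
    show "trank (2 * n - r) b = n"
      using onto by (simp add: trank_def)
    show "sg_iso (FullT n) (variant_mul a) (local_sub (2 * n - r) b) tmul"
      using bF onto assms(2) ba by (rule sg_iso_variant_local_sub_onto)
  qed (rule bF)
qed

end
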